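(* Let $(S;A)$ be sanitized, let $(T;E) = \mathit{ker}(S;A)$, and let $\alpha = \exists x_1\ldots x_k.(t \bowtie u)$ with $\mathrm{bv}(\alpha) \cap (\mathrm{vars}(S) \cup \mathrm{vars}(A)) = \emptyset$. Suppose there is a substitution $\mu$ with $\mathrm{dom}(\mu) = \mathrm{bv}(\alpha)$ such that: 1. $T \vdash_{dy} \mu(x)$ for all $x \in \mathrm{dom}(\mu)$; 2. $\mathrm{pos}_x(r) \subseteq \mathbb{A}(T \cup \mathrm{dom}(\mu), r)$ for all $x \in \mathrm{dom}(\mu)$ and $r \in \{t,u\}$; 3. $(T;E) \vdash_{eq} \mu(t) \bowtie \mu(u)$. Then there is a substitution $\nu$ with $\mathrm{dom}(\nu) = \mathrm{bv}(\alpha)$ satisfying the same three conditions (with $\nu$ in place of $\mu$) which is $M$-bounded, i.e. $|\mathrm{st}(\nu(x))| \le M$ for every $x \in \mathrm{dom}(\nu)$, where $M = |\mathrm{st}(S) \cup \mathrm{st}(A \cup \{\alpha\})|$.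
   Context: $\mathrm{st}(\cdot)$ denotes the set of subterms of a term, or of the terms occurring in a set of terms or assertions. Terms. Fix names $\mathscr{N}$, variables $\mathscr{V}$ with quantification variables $\mathscr{V}_q \subseteq \mathscr{V}$, and keys $\mathscr{K} \subseteq \mathscr{N}$ with inverses. Terms: $t ::= x \mid m \mid (t,u) \mid \{t\}_k$ with $k \in \mathscr{K} \cup \mathscr{V}$. $X \vdash_{dy} t$ means derivable by the Dolev–Yao rules: ax ($t \in X$); fst/snd; pair; dec (from $\{t\}_k$ and $k^{-1}$ get $t$); enc. Positions. $\mathrm{Pos}(m) = \{\varepsilon\}$ for names and variables, and $\mathrm{Pos}(\mathsf{f}(t,u)) = \{\varepsilon\} \cup 0\,\mathrm{Pos}(t) \cup 1\,\mathrm{Pos}(u)$. $t|_p$ is the subterm at $p$, and $\mathrm{pos}_x(t) = \{p : t|_p = x\}$. With $\mathbb{Q}_p = \{\varepsilon\} \cup \{qi \in \mathrm{Pos}(t) : q \text{ a proper prefix of } p\}$, $\mathbb{A}(S,t) = \{p : S \vdash_{dy} t|_q \ \forall q \in \mathbb{Q}_p\}$. Assertions. An assertion is $\exists x_1\ldots x_k.(t \bowtie u)$ with $x_i \in \mathscr{V}_q$. Its positions are $0^k0p$ and $0^k1p$, and its abstractable positions w.r.t. $S$ are computed with $\mathbb{A}(S \cup \{x_1,\ldots,x_k\}, \cdot)$ on each side. $\mathrm{fv}$ and $\mathrm{bv}$ are free and bound variables; $\mathrm{pubs}(\alpha)$ is the set of maximal subterms of $\alpha$ without $\mathscr{V}_q$-variables.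 Proof rules for $S; A \vdash \alpha$: - ax; eq ($t \bowtie t$ if $S \vdash_{dy} t$); sym; - cons: from $t_0 \bowtie u_0$ and $t_1 \bowtie u_1$ get $\mathsf{f}(t_0,t_1) \bowtie \mathsf{f}(u_0,u_1)$; - $\mathsf{proj}_i$: the inverse of cons, allowed if $S \vdash_{dy} t_0, t_1, u_0, u_1$; - trans: from $t_1 \bowtie t_2, \ldots, t_k \bowtie t_{k+1}$ get $t_1 \bowtie t_{k+1}$; - $\exists$intro: from $\alpha[\mathrm{pos}_x(\alpha) \mapsto w]$ with $S \vdash_{dy} w$ and $\mathrm{pos}_x(\alpha) \subseteq \mathbb{A}(S \cup \{x\}, \alpha)$ get $\exists x.\alpha$; - $\exists$elim: from $\exists x.\alpha$ and $S \cup \{x\}; A \cup \{\alpha\} \vdash \gamma$ get $\gamma$, with $x$ not free in $S, A, \gamma$. $\vdash_{eq}$ denotes derivability without the two $\exists$ rules. Sanitized and kernel. $(S;A)$ is sanitized if $(\mathrm{vars}(S) \cup \mathrm{fv}(A)) \cap \mathscr{V}_q = \emptyset$ and $\mathrm{pubs}(\beta) \subseteq S$ for all $\beta \in A$. $\mathit{ker}(S;A) = (S \cup \mathrm{bv}(A);\ \{t \bowtie u : \exists\vec{x}.(t \bowtie u) \in A\})$. Standing assumptions: no variable occurs both free and bound in an assertion; the kernel $(T;E)$ is consistent, i.e. some ground substitution $\lambda$ has $\lambda(t) = \lambda(u)$ for all $t \bowtie u \in E$. *)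

theory Defs
  imports Main
begin

text \<open>Names 'n, variables 'v. Enc t k is the encryption of t under key k;
  well-formed terms only use keys from K (a subset of the names) or variables.\<close>

datatype ('n, 'v) trm = Var 'v | Nm 'n | Pair "('n, 'v) trm" "('n, 'v) trm"
  | Enc "('n, 'v) trm" "('n, 'v) trm"

fun vars :: "('n, 'v) trm \<Rightarrow> 'v set" where
  "vars (Var x) = {x}"
| "vars (Nm n) = {}"
| "vars (Pair t u) = vars t \<union> vars u"
| "vars (Enc t k) = vars t \<union> vars k"

definition varss :: "('n, 'v) trm set \<Rightarrow> 'v set" where
  "varss S = (\<Union>t\<in>S. vars t)"

definition is_key :: "'n set \<Rightarrow> ('n, 'v) trm \<Rightarrow> bool" where
  "is_key K k \<longleftrightarrow> (\<exists>n\<in>K. k = Nm n) \<or> (\<exists>x. k = Var x)"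

fun wf_trm :: "'n set \<Rightarrow> ('n, 'v) trm \<Rightarrow> bool" where
  "wf_trm K (Var x) = True"
| "wf_trm K (Nm n) = True"
| "wf_trm K (Pair t u) = (wf_trm K t \<and> wf_trm K u)"
| "wf_trm K (Enc t k) = (wf_trm K t \<and> is_key K k)"

fun kinv :: "('n \<Rightarrow> 'n) \<Rightarrow> ('n, 'v) trm \<Rightarrow> ('n, 'v) trm" where
  "kinv ik (Nm n) = Nm (ik n)"
| "kinv ik k = k"

fun st :: "('n, 'v) trm \<Rightarrow> ('n, 'v) trm set" where
  "st (Var x) = {Var x}"
| "st (Nm n) = {Nm n}"
| "st (Pair t u) = insert (Pair t u) (st t \<union> st u)"
| "st (Enc t k) = insert (Enc t k) (st t \<union> st k)"

definition sts :: "('n, 'v) trm set \<Rightarrow> ('n, 'v) trm set" where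
  "sts S = (\<Union>t\<in>S. st t)"

inductive dy :: "'n set \<Rightarrow> ('n \<Rightarrow> 'n) \<Rightarrow> ('n, 'v) trm set \<Rightarrow> ('n, 'v) trm \<Rightarrow> bool"
  for K ik X where
  dy_ax: "t \<in> X \<Longrightarrow> dy K ik X t"
| dy_fst: "dy K ik X (Pair t u) \<Longrightarrow> dy K ik X t"
| dy_snd: "dy K ik X (Pair t u) \<Longrightarrow> dy K ik X u"
| dy_pair: "dy K ik X t \<Longrightarrow> dy K ik X u \<Longrightarrow> dy K ik X (Pair t u)"
| dy_dec: "dy K ik X (Enc t k) \<Longrightarrow> dy K ik X (kinv ik k) \<Longrightarrow> dy K ik X t"
| dy_enc: "dy K ik X t \<Longrightarrow> dy K ik X k \<Longrightarrow> is_key K k \<Longrightarrow> dy K ik X (Enc t k)"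

fun Pos :: "('n, 'v) trm \<Rightarrow> nat list set" where
  "Pos (Var x) = {[]}"
| "Pos (Nm n) = {[]}"
| "Pos (Pair t u) = insert [] ((Cons 0) ` Pos t \<union> (Cons 1) ` Pos u)"
| "Pos (Enc t k) = insert [] ((Cons 0) ` Pos t \<union> (Cons 1) ` Pos k)"

fun subt :: "('n, 'v) trm \<Rightarrow> nat list \<Rightarrow> ('n, 'v) trm option" where
  "subt t [] = Some t"
| "subt (Pair t u) (i # p) = (if i = 0 then subt t p else if i = 1 then subt u p else None)"
| "subt (Enc t k) (i # p) = (if i = 0 then subt t p else if i = 1 then subt k p else None)"
| "subt _ (i # p) = None"

definition pos_of :: "'v \<Rightarrow> ('n, 'v) trm \<Rightarrow> nat list set" where
  "pos_of x t = {p \<in> Pos t. subt t p = Some (Var x)}"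

definition Qp :: "('n, 'v) trm \<Rightarrow> nat list \<Rightarrow> nat list set" where
  "Qp t p = insert [] {q @ [i] | q i. q @ [i] \<in> Pos t \<and> (\<exists>r. r \<noteq> [] \<and> p = q @ r)}"

definition absp :: "'n set \<Rightarrow> ('n \<Rightarrow> 'n) \<Rightarrow> ('n, 'v) trm set \<Rightarrow> ('n, 'v) trm \<Rightarrow> nat list set" where
  "absp K ik X t = {p \<in> Pos t. \<forall>q \<in> Qp t p. \<exists>s. subt t q = Some s \<and> dy K ik X s}"

fun subst :: "('v \<rightharpoonup> ('n, 'v) trm) \<Rightarrow> ('n, 'v) trm \<Rightarrow> ('n, 'v) trm" where
  "subst \<mu> (Var x) = (case \<mu> x of Some s \<Rightarrow> s | None \<Rightarrow> Var x)"
| "subst \<mu> (Nm n) = Nm n"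
| "subst \<mu> (Pair t u) = Pair (subst \<mu> t) (subst \<mu> u)"
| "subst \<mu> (Enc t k) = Enc (subst \<mu> t) (subst \<mu> k)"

section \<open>Assertions  \<exists>xs.(t \<bowtie> u)\<close>

type_synonym ('n, 'v) asrt = "'v list \<times> ('n, 'v) trm \<times> ('n, 'v) trm"

definition bv :: "('n, 'v) asrt \<Rightarrow> 'v set" where
  "bv a = set (fst a)"

definition asrt_vars :: "('n, 'v) asrt \<Rightarrow> 'v set" where
  "asrt_vars a = set (fst a) \<union> vars (fst (snd a)) \<union> vars (snd (snd a))"

definition fv :: "('n, 'v) asrt \<Rightarrow> 'v set" where
  "fv a = (vars (fst (snd a)) \<union> vars (snd (snd a))) - set (fst a)"

definition st_asrt :: "('n, 'v) asrt \<Rightarrow> ('n, 'v) trm set" where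
  "st_asrt a = st (fst (snd a)) \<union> st (snd (snd a))"

definition st_asrts :: "('n, 'v) asrt set \<Rightarrow> ('n, 'v) trm set" where
  "st_asrts A = (\<Union>a\<in>A. st_asrt a)"

definition wf_asrt :: "'n set \<Rightarrow> 'v set \<Rightarrow> ('n, 'v) asrt \<Rightarrow> bool" where
  "wf_asrt K Vq a \<longleftrightarrow> set (fst a) \<subseteq> Vq \<and> wf_trm K (fst (snd a)) \<and> wf_trm K (snd (snd a))"

definition pubs :: "'v set \<Rightarrow> ('n, 'v) asrt \<Rightarrow> ('n, 'v) trm set" where
  "pubs Vq a = {s \<in> st_asrt a. vars s \<inter> Vq = {} \<and>
      \<not> (\<exists>s' \<in> st_asrt a. s' \<noteq> s \<and> s \<in> st s' \<and> vars s' \<inter> Vq = {})}"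

definition sanitized :: "'v set \<Rightarrow> ('n, 'v) trm set \<Rightarrow> ('n, 'v) asrt set \<Rightarrow> bool" where
  "sanitized Vq S A \<longleftrightarrow> (varss S \<union> (\<Union>a\<in>A. fv a)) \<inter> Vq = {} \<and> (\<forall>b\<in>A. pubs Vq b \<subseteq> S)"

definition ker_T :: "('n, 'v) trm set \<Rightarrow> ('n, 'v) asrt set \<Rightarrow> ('n, 'v) trm set" where
  "ker_T S A = S \<union> Var ` (\<Union>a\<in>A. bv a)"

definition ker_E :: "('n, 'v) asrt set \<Rightarrow> (('n, 'v) trm \<times> ('n, 'v) trm) set" where
  "ker_E A = {(t, u) | xs t u. (xs, t, u) \<in> A}"

definition consistent :: "(('n, 'v) trm \<times> ('n, 'v) trm) set \<Rightarrow> bool" where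
  "consistent E \<longleftrightarrow> (\<exists>lam :: 'v \<Rightarrow> ('n, 'v) trm. (\<forall>x. vars (lam x) = {}) \<and>
      (\<forall>(t, u) \<in> E. subst (Some \<circ> lam) t = subst (Some \<circ> lam) u))"

section \<open>Equality derivations without the \<exists> rules:  (T;E) \<turnstile>eq t \<bowtie> u\<close>

inductive eqd :: "'n set \<Rightarrow> ('n \<Rightarrow> 'n) \<Rightarrow> ('n, 'v) trm set \<Rightarrow> (('n, 'v) trm \<times> ('n, 'v) trm) set
    \<Rightarrow> ('n, 'v) trm \<Rightarrow> ('n, 'v) trm \<Rightarrow> bool"
  for K ik T E where
  eq_ax: "(t, u) \<in> E \<Longrightarrow> eqd K ik T E t u"
| eq_refl: "dy K ik T t \<Longrightarrow> eqd K ik T E t t"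
| eq_sym: "eqd K ik T E t u \<Longrightarrow> eqd K ik T E u t"
| eq_cons_pair: "eqd K ik T E t0 u0 \<Longrightarrow> eqd K ik T E t1 u1 \<Longrightarrow>
     eqd K ik T E (Pair t0 t1) (Pair u0 u1)"
| eq_cons_enc: "eqd K ik T E t0 u0 \<Longrightarrow> eqd K ik T E t1 u1 \<Longrightarrow>
     eqd K ik T E (Enc t0 t1) (Enc u0 u1)"
| eq_proj0_pair: "eqd K ik T E (Pair t0 t1) (Pair u0 u1) \<Longrightarrow> dy K ik T t0 \<Longrightarrow> dy K ik T t1 \<Longrightarrow>
     dy K ik T u0 \<Longrightarrow> dy K ik T u1 \<Longrightarrow> eqd K ik T E t0 u0"
| eq_proj1_pair: "eqd K ik T E (Pair t0 t1) (Pair u0 u1) \<Longrightarrow> dy K ik T t0 \<Longrightarrow> dy K ik T t1 \<Longrightarrow>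
     dy K ik T u0 \<Longrightarrow> dy K ik T u1 \<Longrightarrow> eqd K ik T E t1 u1"
| eq_proj0_enc: "eqd K ik T E (Enc t0 t1) (Enc u0 u1) \<Longrightarrow> dy K ik T t0 \<Longrightarrow> dy K ik T t1 \<Longrightarrow>
     dy K ik T u0 \<Longrightarrow> dy K ik T u1 \<Longrightarrow> eqd K ik T E t0 u0"
| eq_proj1_enc: "eqd K ik T E (Enc t0 t1) (Enc u0 u1) \<Longrightarrow> dy K ik T t0 \<Longrightarrow> dy K ik T t1 \<Longrightarrow>
     dy K ik T u0 \<Longrightarrow> dy K ik T u1 \<Longrightarrow> eqd K ik T E t1 u1"
| eq_trans: "eqd K ik T E t1 t2 \<Longrightarrow> eqd K ik T E t2 t3 \<Longrightarrow> eqd K ik T E t1 t3"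

definition witness_ok :: "'n set \<Rightarrow> ('n \<Rightarrow> 'n) \<Rightarrow> ('n, 'v) trm set \<Rightarrow> (('n, 'v) trm \<times> ('n, 'v) trm) set
    \<Rightarrow> ('n, 'v) asrt \<Rightarrow> ('v \<rightharpoonup> ('n, 'v) trm) \<Rightarrow> bool" where
  "witness_ok K ik T E \<alpha> \<mu> \<longleftrightarrow>
     dom \<mu> = bv \<alpha> \<and>
     (\<forall>x \<in> dom \<mu>. dy K ik T (the (\<mu> x))) \<and>
     (\<forall>x \<in> dom \<mu>. \<forall>r \<in> {fst (snd \<alpha>), snd (snd \<alpha>)}.
         pos_of x r \<subseteq> absp K ik (T \<union> Var ` dom \<mu>) r) \<and>
     eqd K ik T E (subst \<mu> (fst (snd \<alpha>))) (subst \<mu> (snd (snd \<alpha>)))"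

end

theory Submission
  imports Defs
begin

text \<open>Call a compound subterm of a witness extra if it is neither a subterm of the kernel nor
  an instance of a compound subterm of t or u. An extra subterm s can be eliminated by
  replacing it everywhere, which preserves Dolev-Yao and equality derivations: by a derivable
  term provably equal to s, or, if s is provably equal to no kernel term and no pattern
  instance, its whole equality class by an element of T. Otherwise s is stuck: it is provably
  equal to an underivable kernel term or pattern instance. These partners lie in the image of
  st(S) \<union> st(A \<union> {\<alpha>}) under the witness but outside the witness, and distinct stuck terms
  have distinct partners, so once every extra subterm is stuck the witness has at most M
  subterms. Variables of the witness outside st(S) \<union> st(A \<union> {\<alpha>}) are controlled through a
  unifier of the kernel equations: pumping such a variable to a pair keeps it a unifier, so
  equality derivations cannot move the variable.\<close>

lemma trm_neq_args [simp]:
  "Pair a b \<noteq> a" "Pair a b \<noteq> b" "Enc a b \<noteq> a" "Enc a b \<noteq> b"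
  "a \<noteq> Pair a b" "b \<noteq> Pair a b" "a \<noteq> Enc a b" "b \<noteq> Enc a b"
  by (auto dest: arg_cong[where f = size])

lemma st_refl [simp]: "t \<in> st t"
  by (cases t) auto

lemma st_trans: "a \<in> st b \<Longrightarrow> b \<in> st c \<Longrightarrow> a \<in> st c"
  by (induction c) auto

lemma finite_st [simp]: "finite (st t)"
  by (induction t) auto

lemma finite_vars [simp]: "finite (vars t)"
  by (induction t) auto

lemma size_le_if_st: "a \<in> st b \<Longrightarrow> size a \<le> size b"
  by (induction b) auto

lemma size_less_if_st: "a \<in> st b \<Longrightarrow> a \<noteq> b \<Longrightarrow> size a < size b"
  by (induction b) (auto dest: size_le_if_st)

lemma st_antisym: "a \<in> st b \<Longrightarrow> b \<in> st a \<Longrightarrow> a = b"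
  using size_le_if_st size_less_if_st by fastforce

lemma Var_in_st_iff: "Var x \<in> st t \<longleftrightarrow> x \<in> vars t"
  by (induction t) auto

lemma in_sts_iff: "v \<in> sts S \<longleftrightarrow> (\<exists>s\<in>S. v \<in> st s)"
  by (auto simp: sts_def)

lemma wf_st: "wf_trm K w \<Longrightarrow> v \<in> st w \<Longrightarrow> wf_trm K v"
  by (induction w) (auto simp: is_key_def)

definition is_comp :: "('n, 'v) trm \<Rightarrow> bool" where
  "is_comp w \<longleftrightarrow> (case w of Pair _ _ \<Rightarrow> True | Enc _ _ \<Rightarrow> True | _ \<Rightarrow> False)"

lemma is_comp_simps [simp]:
  "\<not> is_comp (Var x)" "\<not> is_comp (Nm n)" "is_comp (Pair a b)" "is_comp (Enc a b)"
  by (simp_all add: is_comp_def)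

lemma is_comp_kinv [simp]: "is_comp (kinv ik k) \<longleftrightarrow> is_comp k"
  by (cases k) auto

lemma not_is_comp_key: "is_key K k \<Longrightarrow> \<not> is_comp k"
  by (auto simp: is_key_def)

lemma wf_key: "is_key K k \<Longrightarrow> wf_trm K k"
  by (auto simp: is_key_def)

fun args :: "('n, 'v) trm \<Rightarrow> ('n, 'v) trm list" where
  "args (Pair a b) = [a, b]"
| "args (Enc a b) = [a, b]"
| "args _ = []"

lemma args_in_st: "a \<in> set (args p) \<Longrightarrow> a \<in> st p"
  by (cases p) auto

lemma is_comp_if_in_args: "a \<in> set (args p) \<Longrightarrow> is_comp p"
  by (cases p) auto

lemma parent_in_st: "v \<in> st r \<Longrightarrow> v \<noteq> r \<Longrightarrow> \<exists>p\<in>st r. v \<in> set (args p)"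
  by (induction r) auto

lemma subst_in_st_subst: "a \<in> st b \<Longrightarrow> subst \<sigma> a \<in> st (subst \<sigma> b)"
  by (induction b) auto

lemma size_subst_less:
  "a \<in> st b \<Longrightarrow> a \<noteq> b \<Longrightarrow> size (subst \<sigma> a) < size (subst \<sigma> b)"
proof (induction b)
  case (Pair b1 b2)
  then show ?case
    using size_le_if_st[OF subst_in_st_subst[of a b1 \<sigma>]]
      size_le_if_st[OF subst_in_st_subst[of a b2 \<sigma>]] by auto
next
  case (Enc b1 b2)
  then show ?case
    using size_le_if_st[OF subst_in_st_subst[of a b1 \<sigma>]]
      size_le_if_st[OF subst_in_st_subst[of a b2 \<sigma>]] by auto
qed auto

lemma subst_cong: "(\<And>x. x \<in> vars t \<Longrightarrow> \<sigma> x = \<sigma>' x) \<Longrightarrow> subst \<sigma> t = subst \<sigma>' t"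
  by (induction t) auto

lemma subst_id: "(\<And>x. x \<in> vars t \<Longrightarrow> \<sigma> x = None) \<Longrightarrow> subst \<sigma> t = t"
  by (induction t) auto

lemma st_subst_cases:
  "v \<in> st (subst \<sigma> t) \<Longrightarrow>
    v \<in> subst \<sigma> ` st t \<or> (\<exists>x\<in>vars t. \<sigma> x \<noteq> None \<and> v \<in> st (the (\<sigma> x)))"
proof (induction t)
  case (Var x)
  then show ?case by (cases "\<sigma> x") auto
qed force+

lemma subst_neq_if_differ_at:
  assumes "\<And>x. x \<noteq> z \<Longrightarrow> \<sigma> x = \<sigma>' x" "\<sigma> z \<noteq> \<sigma>' z" "\<sigma> z \<noteq> None" "\<sigma>' z \<noteq> None"
  shows "z \<in> vars p \<Longrightarrow> subst \<sigma> p \<noteq> subst \<sigma>' p"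
  using assms by (induction p) auto

lemma is_comp_subst: "is_comp p \<Longrightarrow> is_comp (subst \<sigma> p)"
  by (cases p) auto

lemma args_subst: "is_comp p \<Longrightarrow> args (subst \<sigma> p) = map (subst \<sigma>) (args p)"
  by (cases p) auto

lemma map_subst_args_eq:
  "subst \<sigma> p = subst \<sigma> c \<Longrightarrow> is_comp p \<Longrightarrow> is_comp c \<Longrightarrow>
    map (subst \<sigma>) (args p) = map (subst \<sigma>) (args c)"
  by (cases p; cases c) auto

lemma wf_if_dy: "dy K ik T w \<Longrightarrow> \<forall>w\<in>T. wf_trm K w \<Longrightarrow> wf_trm K w"
  by (induction rule: dy.induct) auto

lemma dy_st_cases: "dy K ik T w \<Longrightarrow> v \<in> st w \<Longrightarrow> dy K ik T v \<or> v \<in> sts T"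
proof (induction arbitrary: v rule: dy.induct)
  case (dy_ax t)
  then show ?case by (auto simp: in_sts_iff)
qed (auto intro: dy.dy_pair dy.dy_enc)

lemma atom_in_sts_if_dy: "dy K ik T w \<Longrightarrow> v \<in> st w \<Longrightarrow> \<not> is_comp v \<Longrightarrow> v \<in> sts T"
proof (induction arbitrary: v rule: dy.induct)
  case (dy_ax t)
  then show ?case by (auto simp: in_sts_iff)
qed auto

lemma nonempty_if_dy: "dy K ik T w \<Longrightarrow> T \<noteq> {}"
  by (induction rule: dy.induct) auto

inductive eqd_term
  for K :: "'n set" and ik :: "'n \<Rightarrow> 'n" and T :: "('n, 'v) trm set"
    and E :: "(('n, 'v) trm \<times> ('n, 'v) trm) set" where
  eqd_term_dy: "dy K ik T w \<Longrightarrow> eqd_term K ik T E w"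
| eqd_term_fst: "(w, w') \<in> E \<Longrightarrow> eqd_term K ik T E w"
| eqd_term_snd: "(w', w) \<in> E \<Longrightarrow> eqd_term K ik T E w"
| eqd_term_pair: "eqd_term K ik T E a \<Longrightarrow> eqd_term K ik T E b \<Longrightarrow> eqd_term K ik T E (Pair a b)"
| eqd_term_enc: "eqd_term K ik T E a \<Longrightarrow> eqd_term K ik T E b \<Longrightarrow> eqd_term K ik T E (Enc a b)"

lemma eqd_term_if_eqd: "eqd K ik T E a b \<Longrightarrow> eqd_term K ik T E a \<and> eqd_term K ik T E b"
  by (induction rule: eqd.induct) (auto intro: eqd_term.intros)

lemma atom_eqd_term_cases:
  "eqd_term K ik T E w \<Longrightarrow> \<not> is_comp w \<Longrightarrow> w \<in> sts T \<or> w \<in> fst ` E \<or> w \<in> snd ` E"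
  by (induction rule: eqd_term.induct) (auto dest: atom_in_sts_if_dy[OF _ st_refl] intro: rev_image_eqI)

lemma dy_if_eqd_term:
  assumes sides: "\<And>a b. (a, b) \<in> E \<Longrightarrow>
      (vars a \<inter> V = {} \<longrightarrow> dy K ik T a) \<and> (vars b \<inter> V = {} \<longrightarrow> dy K ik T b)"
  shows "eqd_term K ik T E w \<Longrightarrow> wf_trm K w \<Longrightarrow> vars w \<inter> V = {} \<Longrightarrow> dy K ik T w"
proof (induction rule: eqd_term.induct)
  case (eqd_term_enc a b)
  then show ?case using wf_key[of K b] by (auto intro: dy.dy_enc)
qed (use sides in \<open>auto intro: dy.intros\<close>)

fun rep :: "('n, 'v) trm set \<Rightarrow> ('n, 'v) trm \<Rightarrow> ('n, 'v) trm \<Rightarrow> ('n, 'v) trm" where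
  "rep C s (Var x) = (if Var x \<in> C then s else Var x)"
| "rep C s (Nm n) = (if Nm n \<in> C then s else Nm n)"
| "rep C s (Pair a b) = (if Pair a b \<in> C then s else Pair (rep C s a) (rep C s b))"
| "rep C s (Enc a b) = (if Enc a b \<in> C then s else Enc (rep C s a) (rep C s b))"

fun rep_below :: "('n, 'v) trm set \<Rightarrow> ('n, 'v) trm \<Rightarrow> ('n, 'v) trm \<Rightarrow> ('n, 'v) trm" where
  "rep_below C s (Pair a b) = Pair (rep C s a) (rep C s b)"
| "rep_below C s (Enc a b) = Enc (rep C s a) (rep C s b)"
| "rep_below C s w = w"

definition subterm_antichain :: "('n, 'v) trm set \<Rightarrow> bool" where
  "subterm_antichain C \<longleftrightarrow> (\<forall>a\<in>C. \<forall>c\<in>C. c \<in> st a \<longrightarrow> c = a)"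

lemma rep_eq: "rep C s w = (if w \<in> C then s else rep_below C s w)"
  by (cases w) auto

lemma rep_id: "(\<And>v. v \<in> st w \<Longrightarrow> v \<notin> C) \<Longrightarrow> rep C s w = w"
  by (induction w) auto

lemma rep_atom: "\<not> is_comp w \<Longrightarrow> \<forall>c\<in>C. is_comp c \<Longrightarrow> rep C s w = w"
  by (cases w) auto

lemma rep_below_id: "subterm_antichain C \<Longrightarrow> w \<in> C \<Longrightarrow> rep_below C s w = w"
proof -
  assume ac: "subterm_antichain C" and w: "w \<in> C"
  have "rep C s v = v" if "v \<in> st w" "v \<noteq> w" for v
    using that ac w st_trans st_antisym unfolding subterm_antichain_def by (metis rep_id)
  then show ?thesis by (cases w) auto
qed

lemma st_rep: "st (rep C s w) \<subseteq> rep C s ` (st w - C) \<union> st s"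
proof (induction w)
  case (Pair w1 w2)
  then show ?case by (cases "Pair w1 w2 \<in> C") (auto intro: rev_image_eqI[of "Pair w1 w2"])
next
  case (Enc w1 w2)
  then show ?case by (cases "Enc w1 w2 \<in> C") (auto intro: rev_image_eqI[of "Enc w1 w2"])
qed auto

lemma subst_map_rep:
  assumes "\<forall>c\<in>C. is_comp c" "\<And>c. c \<in> st w \<Longrightarrow> is_comp c \<Longrightarrow> subst \<nu> c \<notin> C"
  shows "subst (map_option (rep C s) \<circ> \<nu>) w = rep C s (subst \<nu> w)"
  using assms(2)
proof (induction w)
  case (Var y)
  then show ?case using assms(1) by (cases "\<nu> y") auto
next
  case (Pair w1 w2)
  then show ?case using Pair.prems[of "Pair w1 w2"] by auto
next
  case (Enc w1 w2)
  then show ?case using Enc.prems[of "Enc w1 w2"] by auto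
qed (use assms(1) in auto)

lemma dy_rep:
  assumes wf: "\<forall>w\<in>T. wf_trm K w" and C: "\<forall>c\<in>C. is_comp c \<and> c \<notin> sts T"
    and ac: "subterm_antichain C" and s: "dy K ik T s"
  shows "dy K ik T w \<Longrightarrow> dy K ik T (rep C s w)"
proof (induction rule: dy.induct)
  have below: "dy K ik T (rep_below C s w)" if "dy K ik T w" "dy K ik T (rep C s w)" for w
    using that rep_below_id[OF ac] by (cases "w \<in> C") (auto simp: rep_eq)
  {
    case (dy_ax w)
    then have "v \<notin> C" if "v \<in> st w" for v
      using that C by (auto simp: in_sts_iff)
    then show ?case using dy_ax by (simp add: rep_id dy.dy_ax)
  next
    case (dy_fst a b)
    then show ?case using below[of "Pair a b"] by (auto intro: dy.dy_fst)
  next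
    case (dy_snd a b)
    then show ?case using below[of "Pair a b"] by (auto intro: dy.dy_snd)
  next
    case (dy_dec a k)
    have "\<not> is_comp k" using wf_if_dy[OF dy_dec.hyps(1) wf] not_is_comp_key by auto
    then have "rep C s k = k" "rep C s (kinv ik k) = kinv ik k"
      using C rep_atom[of k C s] rep_atom[of "kinv ik k" C s] by auto
    then show ?case using dy_dec below[of "Enc a k"] by (auto intro: dy.dy_dec)
  next
    case (dy_pair a b)
    then show ?case using s by (auto intro: dy.dy_pair)
  next
    case (dy_enc a k)
    have "rep C s k = k" using not_is_comp_key[OF dy_enc.hyps(3)] C rep_atom by blast
    then show ?case using dy_enc s by (auto intro: dy.dy_enc)
  }
qed

text \<open>C is closed under provable equality up to terms provably equal to s, so at a root
  in C the replacement can be undone by a detour through s.\<close>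

lemma eqd_rep_iff_eqd_rep_below:
  assumes ac: "subterm_antichain C" and s: "dy K ik T s"
    and closed: "\<forall>a\<in>C. \<forall>b. eqd K ik T E a b \<longrightarrow> b \<in> C \<or> eqd K ik T E s a"
    and ww': "eqd K ik T E w w'"
  shows "eqd K ik T E (rep C s w) (rep C s w') \<longleftrightarrow>
    eqd K ik T E (rep_below C s w) (rep_below C s w')"
proof -
  note trans = eqd.eq_trans and sym = eqd.eq_sym
  consider "w \<in> C" "w' \<in> C" | "w \<in> C" "w' \<notin> C" | "w \<notin> C" "w' \<in> C" | "w \<notin> C" "w' \<notin> C"
    by blast
  then show ?thesis
  proof cases
    case 1
    then show ?thesis using ww' s rep_below_id[OF ac] by (simp add: rep_eq eqd.eq_refl)
  next
    case 2
    then have "eqd K ik T E s w" using closed ww' by blast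
    then show ?thesis using 2 rep_below_id[OF ac] by (auto simp: rep_eq intro: trans sym)
  next
    case 3
    then have "eqd K ik T E s w'" using closed sym[OF ww'] by blast
    then show ?thesis using 3 rep_below_id[OF ac] by (auto simp: rep_eq intro: trans sym)
  qed (simp add: rep_eq)
qed

lemma eqd_rep:
  assumes wf: "\<forall>w\<in>T. wf_trm K w"
    and C: "\<forall>c\<in>C. is_comp c \<and> c \<notin> sts T \<and> (\<forall>(a, b)\<in>E. c \<notin> st a \<union> st b)"
    and ac: "subterm_antichain C" and s: "dy K ik T s"
    and closed: "\<forall>a\<in>C. \<forall>b. eqd K ik T E a b \<longrightarrow> b \<in> C \<or> eqd K ik T E s a"
  shows "eqd K ik T E a b \<Longrightarrow> eqd K ik T E (rep C s a) (rep C s b)"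
proof (induction rule: eqd.induct)
  note iff = eqd_rep_iff_eqd_rep_below[OF ac s closed]
  have "\<forall>c\<in>C. is_comp c \<and> c \<notin> sts T" using C by blast
  note dy_rep = dy_rep[OF wf this ac s]
  {
    case (eq_ax a b)
    then have "v \<notin> C" if "v \<in> st a \<union> st b" for v using that C by fast
    then show ?case using eq_ax by (simp add: rep_id eqd.eq_ax)
  next
    case (eq_refl a)
    then show ?case using dy_rep by (auto intro: eqd.eq_refl)
  next
    case (eq_cons_pair t0 u0 t1 u1)
    then show ?case using iff[OF eqd.eq_cons_pair] by (auto intro: eqd.eq_cons_pair)
  next
    case (eq_cons_enc t0 u0 t1 u1)
    then show ?case using iff[OF eqd.eq_cons_enc] by (auto intro: eqd.eq_cons_enc)
  next
    case (eq_proj0_pair t0 t1 u0 u1)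
    then have "eqd K ik T E (rep_below C s (Pair t0 t1)) (rep_below C s (Pair u0 u1))"
      using iff by blast
    then show ?case using eq_proj0_pair.hyps dy_rep by (auto intro: eqd.eq_proj0_pair)
  next
    case (eq_proj1_pair t0 t1 u0 u1)
    then have "eqd K ik T E (rep_below C s (Pair t0 t1)) (rep_below C s (Pair u0 u1))"
      using iff by blast
    then show ?case using eq_proj1_pair.hyps dy_rep by (auto intro: eqd.eq_proj1_pair)
  next
    case (eq_proj0_enc t0 t1 u0 u1)
    then have "eqd K ik T E (rep_below C s (Enc t0 t1)) (rep_below C s (Enc u0 u1))"
      using iff by blast
    then show ?case using eq_proj0_enc.hyps dy_rep by (auto intro: eqd.eq_proj0_enc)
  next
    case (eq_proj1_enc t0 t1 u0 u1)
    then have "eqd K ik T E (rep_below C s (Enc t0 t1)) (rep_below C s (Enc u0 u1))"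
      using iff by blast
    then show ?case using eq_proj1_enc.hyps dy_rep by (auto intro: eqd.eq_proj1_enc)
  }
qed (auto intro: eqd.eq_sym eqd.eq_trans)

definition unifies :: "('v \<Rightarrow> ('n, 'v) trm) \<Rightarrow> (('n, 'v) trm \<times> ('n, 'v) trm) set \<Rightarrow> bool" where
  "unifies \<theta> E \<longleftrightarrow> (\<forall>(a, b)\<in>E. subst (Some \<circ> \<theta>) a = subst (Some \<circ> \<theta>) b)"

lemma eqd_sound:
  "eqd K ik T E a b \<Longrightarrow> unifies \<theta> E \<Longrightarrow> subst (Some \<circ> \<theta>) a = subst (Some \<circ> \<theta>) b"
  by (induction rule: eqd.induct) (auto simp: unifies_def)

lemma subst_eq_st_imp_eq: "subst \<sigma> a = subst \<sigma> c \<Longrightarrow> c \<in> st a \<Longrightarrow> c = a"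
  using size_subst_less[of c a \<sigma>] by fastforce

lemma eqd_sound_st: "eqd K ik T E a c \<Longrightarrow> unifies \<theta> E \<Longrightarrow> c \<in> st a \<Longrightarrow> c = a"
  using subst_eq_st_imp_eq eqd_sound by metis

definition pump :: "('v \<Rightarrow> ('n, 'v) trm) \<Rightarrow> 'v \<Rightarrow> 'v \<Rightarrow> ('n, 'v) trm" where
  "pump \<theta> z = \<theta>(z := Pair (\<theta> z) (\<theta> z))"

lemma unifies_pump:
  assumes "unifies \<theta> E" "\<forall>(a, b)\<in>E. z \<notin> vars a \<union> vars b"
  shows "unifies (pump \<theta> z) E"
proof -
  have "subst (Some \<circ> pump \<theta> z) a = subst (Some \<circ> \<theta>) a" if "z \<notin> vars a" for a
    using that by (intro subst_cong) (auto simp: pump_def)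
  then show ?thesis using assms unfolding unifies_def by fastforce
qed

text \<open>A variable that does not occur in the axioms is invisible to equality derivations:
  pumping it in a unifier of the axioms would otherwise separate the two sides.\<close>

lemma eqd_fresh_var_iff:
  assumes "eqd K ik T E p c" "unifies \<theta> E" "\<forall>(a, b)\<in>E. z \<notin> vars a \<union> vars b"
  shows "z \<in> vars p \<longleftrightarrow> z \<in> vars c"
proof -
  have neq: "subst (Some \<circ> \<theta>) q \<noteq> subst (Some \<circ> pump \<theta> z) q" if "z \<in> vars q" for q
    using that by (intro subst_neq_if_differ_at[of z]) (auto simp: pump_def)
  have same: "subst (Some \<circ> \<theta>) q = subst (Some \<circ> pump \<theta> z) q" if "z \<notin> vars q" for q
    using that by (intro subst_cong) (auto simp: pump_def)
  have "subst (Some \<circ> \<theta>) p = subst (Some \<circ> \<theta>) c"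
    "subst (Some \<circ> pump \<theta> z) p = subst (Some \<circ> pump \<theta> z) c"
    using eqd_sound[OF assms(1)] assms(2) unifies_pump[OF assms(2,3)] by auto
  then show ?thesis using neq same by metis
qed

lemma eqd_fresh_var_arg:
  assumes "eqd K ik T E p c" "unifies \<theta> E" "\<forall>(a, b)\<in>E. z \<notin> vars a \<union> vars b"
    and "is_comp p" "is_comp c" "Var z \<in> set (args p)"
  shows "Var z \<in> set (args c)"
proof -
  obtain i where i: "i < length (args p)" "args p ! i = Var z"
    using assms(6) by (auto simp: in_set_conv_nth)
  define q where "q = args c ! i"
  have unified: "subst (Some \<circ> \<sigma>) (Var z) = subst (Some \<circ> \<sigma>) q \<and> i < length (args c)"
    if "unifies \<sigma> E" for \<sigma>
  proof -
    have "map (subst (Some \<circ> \<sigma>)) (args p) = map (subst (Some \<circ> \<sigma>)) (args c)"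
      using map_subst_args_eq eqd_sound[OF assms(1) that] assms(4,5) by blast
    then show ?thesis using i unfolding q_def by (metis length_map nth_map)
  qed
  have lam: "\<theta> z = subst (Some \<circ> \<theta>) q" and i_c: "i < length (args c)"
    and pumped: "Pair (\<theta> z) (\<theta> z) = subst (Some \<circ> pump \<theta> z) q"
    using unified[OF assms(2)] unified[OF unifies_pump[OF assms(2,3)]] by (simp_all add: pump_def)
  have "q = Var z"
  proof (rule ccontr)
    assume "q \<noteq> Var z"
    show False
    proof (cases "z \<in> vars q")
      case True
      then show False
        using size_subst_less[of "Var z" q "Some \<circ> \<theta>"] lam \<open>q \<noteq> Var z\<close>
        by (simp add: Var_in_st_iff)
    next
      case False
      then have "subst (Some \<circ> pump \<theta> z) q = subst (Some \<circ> \<theta>) q"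
        by (intro subst_cong) (auto simp: pump_def)
      then show False using lam pumped by (metis trm_neq_args(1))
    qed
  qed
  then show ?thesis using i_c unfolding q_def by (metis nth_mem)
qed

lemma card_le_if_inj_outside:
  assumes "finite N" "W \<subseteq> N \<union> R" "inj_on f R" "f ` R \<subseteq> N - W"
  shows "card W \<le> card N"
proof -
  have "finite (f ` R)" using assms(1,4) finite_subset by blast
  then have finR: "finite R" using assms(3) finite_image_iff by blast
  have "card W \<le> card (W \<inter> N) + card (W - N)"
    by (metis card_Un_le Int_Diff_Un)
  also have "card (W - N) \<le> card R"
    using assms(2) finR by (intro card_mono) auto
  also have "card R \<le> card (N - W)"
    using card_inj_on_le[OF assms(3,4)] assms(1) by simp
  also have "card (W \<inter> N) + card (N - W) = card N"
    using assms(1) by (metis Int_commute card_Int_Diff)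
  finally show ?thesis by simp
qed

text \<open>The goal is t \<approx> u with bound variables X, to be solved over the kernel (T; E);
  D collects the terms of the kernel, B is the set whose size bounds the witness, and
  \<theta> unifies the equations of the kernel.\<close>

locale witness_bound =
  fixes K :: "'n set" and ik :: "'n \<Rightarrow> 'n" and T :: "('n, 'v) trm set"
    and E :: "(('n, 'v) trm \<times> ('n, 'v) trm) set" and D B :: "('n, 'v) trm set"
    and t u :: "('n, 'v) trm" and X :: "'v set" and \<theta> :: "'v \<Rightarrow> ('n, 'v) trm"
  assumes wf_T: "\<forall>w\<in>T. wf_trm K w"
    and T_subset_D: "T \<subseteq> D"
    and D_st_closed: "w \<in> D \<Longrightarrow> v \<in> st w \<Longrightarrow> v \<in> D"
    and D_fresh: "w \<in> D \<Longrightarrow> vars w \<inter> X = {}"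
    and E_sides: "(a, b) \<in> E \<Longrightarrow> a \<in> D \<inter> B \<and> b \<in> D \<inter> B"
    and unifies_E: "unifies \<theta> E"
    and finite_B: "finite B"
    and B_st_closed: "w \<in> B \<Longrightarrow> v \<in> st w \<Longrightarrow> v \<in> B"
    and t_in_B: "t \<in> B" and u_in_B: "u \<in> B"
    and underivable_D_in_B: "c \<in> D \<Longrightarrow> \<not> dy K ik T c \<Longrightarrow> c \<in> B"
    and D_minus_B_Var: "w \<in> D \<Longrightarrow> w \<notin> B \<Longrightarrow> \<exists>z. w = Var z"
    and sts_T_dy_if_eqd: "c \<in> sts T \<Longrightarrow> eqd K ik T E s c \<Longrightarrow> dy K ik T c"
begin

abbreviation "eqE \<equiv> eqd K ik T E"
abbreviation "dyT \<equiv> dy K ik T"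

text \<open>The position condition on a witness depends only on its domain, so it is omitted.\<close>

definition is_solution :: "('v \<rightharpoonup> ('n, 'v) trm) \<Rightarrow> bool" where
  "is_solution \<nu> \<longleftrightarrow> dom \<nu> = X \<and> (\<forall>y\<in>X. dyT (the (\<nu> y))) \<and> eqE (subst \<nu> t) (subst \<nu> u)"

definition X_occ :: "'v set" where
  "X_occ = X \<inter> (vars t \<union> vars u)"

definition sol_sts :: "('v \<rightharpoonup> ('n, 'v) trm) \<Rightarrow> ('n, 'v) trm set" where
  "sol_sts \<nu> = (\<Union>y\<in>X_occ. st (the (\<nu> y)))"

definition pattern_insts :: "('v \<rightharpoonup> ('n, 'v) trm) \<Rightarrow> ('n, 'v) trm set" where
  "pattern_insts \<nu> = subst \<nu> ` {w \<in> st t \<union> st u. is_comp w}"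

definition extra :: "('v \<rightharpoonup> ('n, 'v) trm) \<Rightarrow> ('n, 'v) trm set" where
  "extra \<nu> = {s \<in> sol_sts \<nu>. is_comp s \<and> s \<notin> D \<and> s \<notin> pattern_insts \<nu>}"

definition stuck :: "('v \<rightharpoonup> ('n, 'v) trm) \<Rightarrow> ('n, 'v) trm \<Rightarrow> bool" where
  "stuck \<nu> s \<longleftrightarrow> (\<exists>c\<in>D \<union> pattern_insts \<nu>. c \<noteq> s \<and> eqE s c) \<and>
     (\<forall>c\<in>D \<union> pattern_insts \<nu> \<union> sol_sts \<nu>. c \<noteq> s \<and> eqE s c \<longrightarrow> \<not> dyT c)"

lemma finite_sol_sts: "finite (sol_sts \<nu>)"
  unfolding sol_sts_def X_occ_def by auto

lemma finite_extra: "finite (extra \<nu>)"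
  unfolding extra_def using finite_sol_sts by simp

lemma sts_T_subset_D: "sts T \<subseteq> D"
  using T_subset_D D_st_closed by (fastforce simp: in_sts_iff)

lemma st_tu_subset_B: "w \<in> st t \<union> st u \<Longrightarrow> w \<in> B"
  using B_st_closed t_in_B u_in_B by blast

lemma pattern_insts_subset: "pattern_insts \<nu> \<subseteq> subst \<nu> ` B"
  unfolding pattern_insts_def using st_tu_subset_B by blast

lemma sol_sts_cases: "is_solution \<nu> \<Longrightarrow> w \<in> sol_sts \<nu> \<Longrightarrow> dyT w \<or> w \<in> sts T"
  unfolding is_solution_def sol_sts_def X_occ_def using dy_st_cases by blast

lemma atom_sol_sts_in_D: "is_solution \<nu> \<Longrightarrow> w \<in> sol_sts \<nu> \<Longrightarrow> \<not> is_comp w \<Longrightarrow> w \<in> D"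
  unfolding is_solution_def sol_sts_def X_occ_def
  using atom_in_sts_if_dy sts_T_subset_D by blast

lemma dy_extra: "is_solution \<nu> \<Longrightarrow> s \<in> extra \<nu> \<Longrightarrow> dyT s"
  using sol_sts_cases sts_T_subset_D unfolding extra_def by blast

lemma subst_D: "is_solution \<nu> \<Longrightarrow> w \<in> D \<Longrightarrow> subst \<nu> w = w"
  using D_fresh[of w] unfolding is_solution_def by (intro subst_id) auto

lemma comp_st_pattern_insts:
  assumes sol: "is_solution \<nu>" and c: "c \<in> pattern_insts \<nu>" and v: "v \<in> st c" "is_comp v"
  shows "v \<in> pattern_insts \<nu> \<union> sol_sts \<nu>"
proof -
  obtain w where w: "w \<in> st t \<union> st u" "is_comp w" "c = subst \<nu> w"
    using c unfolding pattern_insts_def by auto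
  have st_w: "w' \<in> st t \<union> st u" if "w' \<in> st w" for w'
    using that w(1) st_trans by blast
  have occ: "x \<in> X_occ" if "x \<in> vars w" "\<nu> x \<noteq> None" for x
    using that sol st_w[of "Var x"] unfolding is_solution_def X_occ_def
    by (auto simp: Var_in_st_iff)
  from st_subst_cases[OF v(1)[unfolded w(3)]] show ?thesis
  proof
    assume "v \<in> subst \<nu> ` st w"
    then obtain w' where w': "w' \<in> st w" "v = subst \<nu> w'" by auto
    show ?thesis
    proof (cases "is_comp w'")
      case True
      then show ?thesis using w' st_w unfolding pattern_insts_def by blast
    next
      case False
      then obtain y where "w' = Var y" "\<nu> y \<noteq> None" using v(2) w' by (cases w') (auto split: option.splits)
      then show ?thesis
        using w' occ[of y] st_trans[OF _ w'(1), of "Var y"] unfolding sol_sts_def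
        by (force simp: Var_in_st_iff)
    qed
  next
    assume "\<exists>x\<in>vars w. \<nu> x \<noteq> None \<and> v \<in> st (the (\<nu> x))"
    then show ?thesis using occ unfolding sol_sts_def by blast
  qed
qed

lemma subst_rep_pattern:
  assumes C: "\<forall>a\<in>C. is_comp a \<and> a \<notin> pattern_insts \<nu>" and w: "w \<in> st t \<union> st u"
  shows "subst (map_option (rep C s) \<circ> \<nu>) w = rep C s (subst \<nu> w)"
proof (rule subst_map_rep)
  show "\<forall>c\<in>C. is_comp c" using C by blast
  fix c assume "c \<in> st w" "is_comp c"
  then show "subst \<nu> c \<notin> C"
    using C w st_trans unfolding pattern_insts_def by blast
qed

lemma is_solution_rep:
  assumes sol: "is_solution \<nu>" and C: "\<forall>a\<in>C. is_comp a \<and> a \<notin> D \<and> a \<notin> pattern_insts \<nu>"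
    and ac: "subterm_antichain C" and s: "dyT s"
    and closed: "\<forall>a\<in>C. \<forall>b. eqE a b \<longrightarrow> b \<in> C \<or> eqE s a"
  shows "is_solution (map_option (rep C s) \<circ> \<nu>)"
proof -
  have C_T: "\<forall>c\<in>C. is_comp c \<and> c \<notin> sts T" using C sts_T_subset_D by blast
  have C_E: "\<forall>c\<in>C. is_comp c \<and> c \<notin> sts T \<and> (\<forall>(a, b)\<in>E. c \<notin> st a \<union> st b)"
    using C_T C E_sides D_st_closed by blast
  have C_P: "\<forall>a\<in>C. is_comp a \<and> a \<notin> pattern_insts \<nu>" using C by blast
  have "subst (map_option (rep C s) \<circ> \<nu>) w = rep C s (subst \<nu> w)" if "w \<in> {t, u}" for w
    using subst_rep_pattern[OF C_P] that by auto
  then show ?thesis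
    unfolding is_solution_def
  proof (intro conjI ballI)
    show "dom (map_option (rep C s) \<circ> \<nu>) = X"
      using sol by (simp add: is_solution_def)
    fix y assume "y \<in> X"
    then obtain v where "\<nu> y = Some v" "dyT v" using sol unfolding is_solution_def by force
    then show "dyT (the ((map_option (rep C s) \<circ> \<nu>) y))" using dy_rep[OF wf_T C_T ac s] by simp
  qed (use sol eqd_rep[OF wf_T C_E ac s closed] in \<open>simp add: is_solution_def\<close>)
qed

lemma pattern_insts_rep:
  assumes "\<forall>a\<in>C. is_comp a \<and> a \<notin> pattern_insts \<nu>"
  shows "pattern_insts (map_option (rep C s) \<circ> \<nu>) = rep C s ` pattern_insts \<nu>"
  using subst_rep_pattern[OF assms] unfolding pattern_insts_def by (auto simp: image_image)

lemma sol_sts_rep_subset: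
  assumes sol: "is_solution \<nu>"
  shows "sol_sts (map_option (rep C s) \<circ> \<nu>) \<subseteq> rep C s ` (sol_sts \<nu> - C) \<union> st s"
proof
  fix w assume "w \<in> sol_sts (map_option (rep C s) \<circ> \<nu>)"
  then obtain y where y: "y \<in> X_occ" "w \<in> st (the ((map_option (rep C s) \<circ> \<nu>) y))"
    unfolding sol_sts_def by blast
  have "the ((map_option (rep C s) \<circ> \<nu>) y) = rep C s (the (\<nu> y))"
    using y(1) sol unfolding X_occ_def is_solution_def by force
  moreover have "rep C s ` (st (the (\<nu> y)) - C) \<subseteq> rep C s ` (sol_sts \<nu> - C)"
    using y(1) unfolding sol_sts_def by (intro image_mono) blast
  ultimately show "w \<in> rep C s ` (sol_sts \<nu> - C) \<union> st s"
    using y(2) st_rep[of C s "the (\<nu> y)"] by auto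
qed

lemma extra_rep_subset:
  assumes sol: "is_solution \<nu>" and C: "\<forall>a\<in>C. is_comp a \<and> a \<notin> D \<and> a \<notin> pattern_insts \<nu>"
    and st_s: "\<forall>v\<in>st s. v \<notin> C \<and> (is_comp v \<longrightarrow> v \<in> D \<union> pattern_insts \<nu> \<union> sol_sts \<nu>)"
  shows "extra (map_option (rep C s) \<circ> \<nu>) \<subseteq> rep C s ` (extra \<nu> - C)"
proof
  let ?\<nu>' = "map_option (rep C s) \<circ> \<nu>"
  have P': "pattern_insts ?\<nu>' = rep C s ` pattern_insts \<nu>"
    using pattern_insts_rep C by blast
  have rep_D: "rep C s w = w" if "w \<in> D" for w
    using that C D_st_closed by (intro rep_id) blast
  have rep_s: "rep C s v = v" if "v \<in> st s" for v
    using that st_s st_trans by (intro rep_id) blast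
  fix v' assume "v' \<in> extra ?\<nu>'"
  then have v': "v' \<in> sol_sts ?\<nu>'" "is_comp v'" "v' \<notin> D" "v' \<notin> pattern_insts ?\<nu>'"
    unfolding extra_def by auto
  obtain v where v: "v \<in> sol_sts \<nu>" "v \<notin> C" "v' = rep C s v"
  proof (cases "v' \<in> st s")
    case True
    then have fixed: "rep C s v' = v'" by (rule rep_s)
    then have "v' \<notin> pattern_insts \<nu>" using v'(4) P' by (metis image_eqI)
    then have "v' \<in> sol_sts \<nu>" "v' \<notin> C" using True st_s v'(2,3) by auto
    then show ?thesis using that[of v'] fixed by simp
  next
    case False
    then show ?thesis using that sol_sts_rep_subset[OF sol] v'(1) by blast
  qed
  have "is_comp v" using v(3) v'(2) rep_atom C by metis
  moreover have "v \<notin> D" using v(3) v'(3) rep_D by metis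
  moreover have "v \<notin> pattern_insts \<nu>" using v(3) v'(4) P' by blast
  ultimately show "v' \<in> rep C s ` (extra \<nu> - C)" using v unfolding extra_def by blast
qed

lemma card_extra_rep_less:
  assumes sol: "is_solution \<nu>" and C: "\<forall>a\<in>C. is_comp a \<and> a \<notin> D \<and> a \<notin> pattern_insts \<nu>"
    and ac: "subterm_antichain C" and s: "dyT s"
    and closed: "\<forall>a\<in>C. \<forall>b. eqE a b \<longrightarrow> b \<in> C \<or> eqE s a"
    and st_s: "\<forall>v\<in>st s. v \<notin> C \<and> (is_comp v \<longrightarrow> v \<in> D \<union> pattern_insts \<nu> \<union> sol_sts \<nu>)"
    and C_extra: "C \<inter> extra \<nu> \<noteq> {}"
  shows "\<exists>\<nu>'. is_solution \<nu>' \<and> card (extra \<nu>') < card (extra \<nu>)"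
proof -
  let ?\<nu>' = "map_option (rep C s) \<circ> \<nu>"
  have "card (extra ?\<nu>') \<le> card (rep C s ` (extra \<nu> - C))"
    using extra_rep_subset[OF sol C st_s] finite_extra by (intro card_mono) auto
  also have "\<dots> \<le> card (extra \<nu> - C)"
    using finite_extra by (intro card_image_le) auto
  also have "\<dots> < card (extra \<nu>)"
    using C_extra finite_extra by (intro psubset_card_mono) auto
  finally show ?thesis using is_solution_rep[OF sol C ac s closed] by blast
qed

lemma sol_sts_st_closed: "w \<in> sol_sts \<nu> \<Longrightarrow> v \<in> st w \<Longrightarrow> v \<in> sol_sts \<nu>"
  unfolding sol_sts_def using st_trans by blast

lemma extra_reducible_by_equal_dy:
  assumes sol: "is_solution \<nu>" and s: "s \<in> extra \<nu>"
    and c: "c \<in> D \<union> pattern_insts \<nu> \<union> sol_sts \<nu>" "c \<noteq> s" "eqE s c" "dyT c"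
  shows "\<exists>\<nu>'. is_solution \<nu>' \<and> card (extra \<nu>') < card (extra \<nu>)"
proof (rule card_extra_rep_less[OF sol, of "{s}" c])
  show "\<forall>a\<in>{s}. is_comp a \<and> a \<notin> D \<and> a \<notin> pattern_insts \<nu>"
    using s unfolding extra_def by auto
  show "subterm_antichain {s}" unfolding subterm_antichain_def by auto
  show "\<forall>a\<in>{s}. \<forall>b. eqE a b \<longrightarrow> b \<in> {s} \<or> eqE c a"
    using eqd.eq_sym[OF c(3)] by blast
  show "{s} \<inter> extra \<nu> \<noteq> {}" using s by auto
  have "s \<notin> st c" using eqd_sound_st[OF eqd.eq_sym[OF c(3)] unifies_E] c(2) by blast
  moreover have "v \<in> D \<union> pattern_insts \<nu> \<union> sol_sts \<nu>" if "v \<in> st c" "is_comp v" for v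
    using c(1) that D_st_closed comp_st_pattern_insts[OF sol] sol_sts_st_closed by blast
  ultimately show "\<forall>v\<in>st c. v \<notin> {s} \<and> (is_comp v \<longrightarrow> v \<in> D \<union> pattern_insts \<nu> \<union> sol_sts \<nu>)"
    by blast
qed (fact c(4))

lemma extra_reducible_if_isolated:
  assumes sol: "is_solution \<nu>" and s: "s \<in> extra \<nu>"
    and isolated: "\<forall>c\<in>D \<union> pattern_insts \<nu>. c \<noteq> s \<longrightarrow> \<not> eqE s c"
  shows "\<exists>\<nu>'. is_solution \<nu>' \<and> card (extra \<nu>') < card (extra \<nu>)"
proof -
  obtain d where d: "d \<in> T" using nonempty_if_dy[OF dy_extra[OF sol s]] by blast
  let ?C = "insert s {w. eqE s w}"
  have C_eq: "subst (Some \<circ> \<theta>) a = subst (Some \<circ> \<theta>) s" if "a \<in> ?C" for a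
    using that eqd_sound[OF _ unifies_E] by auto
  have C_D: "a \<notin> D \<and> a \<notin> pattern_insts \<nu>" if "a \<in> ?C" for a
    using that isolated s unfolding extra_def by auto
  show ?thesis
  proof (rule card_extra_rep_less[OF sol, of ?C d])
    show "\<forall>a\<in>?C. is_comp a \<and> a \<notin> D \<and> a \<notin> pattern_insts \<nu>"
    proof
      fix a assume a: "a \<in> ?C"
      have "is_comp a" if "eqE s a"
        using atom_eqd_term_cases[OF conjunct2[OF eqd_term_if_eqd[OF that]]] C_D[OF a]
          sts_T_subset_D E_sides by force
      then show "is_comp a \<and> a \<notin> D \<and> a \<notin> pattern_insts \<nu>"
        using a C_D[OF a] s unfolding extra_def by auto
    qed
    show "subterm_antichain ?C"
      unfolding subterm_antichain_def using C_eq subst_eq_st_imp_eq by metis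
    show "dyT d" using d by (rule dy.dy_ax)
    show "\<forall>a\<in>?C. \<forall>b. eqE a b \<longrightarrow> b \<in> ?C \<or> eqE d a"
      by (auto intro: eqd.eq_trans)
    show "?C \<inter> extra \<nu> \<noteq> {}" using s by auto
    show "\<forall>v\<in>st d. v \<notin> ?C \<and> (is_comp v \<longrightarrow> v \<in> D \<union> pattern_insts \<nu> \<union> sol_sts \<nu>)"
      using d T_subset_D D_st_closed C_D by blast
  qed
qed

lemma extra_reducible_unless_stuck:
  assumes "is_solution \<nu>" "s \<in> extra \<nu>" "\<not> stuck \<nu> s"
  shows "\<exists>\<nu>'. is_solution \<nu>' \<and> card (extra \<nu>') < card (extra \<nu>)"
proof (cases "\<exists>c\<in>D \<union> pattern_insts \<nu> \<union> sol_sts \<nu>. c \<noteq> s \<and> eqE s c \<and> dyT c")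
  case True
  then show ?thesis using extra_reducible_by_equal_dy[OF assms(1,2)] by blast
next
  case False
  then show ?thesis
    using assms extra_reducible_if_isolated unfolding stuck_def by blast
qed

lemma args_pattern_insts: "c \<in> pattern_insts \<nu> \<Longrightarrow> v \<in> set (args c) \<Longrightarrow> v \<in> subst \<nu> ` B"
proof -
  assume "c \<in> pattern_insts \<nu>" "v \<in> set (args c)"
  then obtain w where "w \<in> st t \<union> st u" "is_comp w" "v \<in> subst \<nu> ` set (args w)"
    unfolding pattern_insts_def by (fastforce simp: args_subst)
  then show ?thesis using st_tu_subset_B B_st_closed args_in_st by blast
qed

lemma Var_arg_stuck_in_subst_B:
  assumes sol: "is_solution \<nu>" and p: "p \<in> extra \<nu>" "stuck \<nu> p"
    and z: "Var z \<in> set (args p)" "Var z \<notin> B"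
  shows "Var z \<in> subst \<nu> ` B"
proof -
  have z_fresh: "\<forall>(a, b)\<in>E. z \<notin> vars a \<union> vars b"
    using E_sides z(2) B_st_closed by (fastforce simp flip: Var_in_st_iff)
  obtain c where c: "c \<in> D \<union> pattern_insts \<nu>" "eqE p c" "\<not> dyT c"
    using p(2) unfolding stuck_def by blast
  show ?thesis
  proof (cases "c \<in> D")
    case True
    then have "z \<notin> vars c"
      using c(3) underivable_D_in_B z(2) B_st_closed by (metis Var_in_st_iff)
    moreover have "z \<in> vars p" using z(1) args_in_st by (metis Var_in_st_iff)
    ultimately show ?thesis using eqd_fresh_var_iff[OF c(2) unifies_E z_fresh] by blast
  next
    case False
    then have "c \<in> pattern_insts \<nu>" "is_comp c"
      using c(1) is_comp_subst unfolding pattern_insts_def by auto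
    moreover have "is_comp p" using z(1) by (rule is_comp_if_in_args)
    ultimately show ?thesis
      using eqd_fresh_var_arg[OF c(2) unifies_E z_fresh _ _ z(1)] args_pattern_insts by blast
  qed
qed

text \<open>A variable outside B in a solution is the value of a bound variable or an argument of
  its parent there, and that parent is a pattern instance or a stuck extra term.\<close>

lemma Var_sol_sts_in_subst_B:
  assumes sol: "is_solution \<nu>" and stuck: "\<forall>s\<in>extra \<nu>. stuck \<nu> s"
    and z: "Var z \<in> sol_sts \<nu>" "Var z \<notin> B"
  shows "Var z \<in> subst \<nu> ` B"
proof -
  obtain y where y: "y \<in> X_occ" "Var z \<in> st (the (\<nu> y))"
    using z(1) unfolding sol_sts_def by blast
  have "Var y \<in> B" "subst \<nu> (Var y) = the (\<nu> y)"
    using y(1) sol st_tu_subset_B unfolding X_occ_def is_solution_def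
    by (auto simp: Var_in_st_iff split: option.split)
  then have ?thesis if "the (\<nu> y) = Var z" using that by (metis image_eqI)
  moreover
  {
    assume "the (\<nu> y) \<noteq> Var z"
    then obtain p where p: "p \<in> st (the (\<nu> y))" "Var z \<in> set (args p)"
      using parent_in_st y(2) by metis
    have "p \<in> sol_sts \<nu>" using y(1) p(1) unfolding sol_sts_def by blast
    moreover have "p \<notin> B" using p(2) z(2) B_st_closed args_in_st by blast
    moreover have "is_comp p" using p(2) by (rule is_comp_if_in_args)
    ultimately have "p \<in> pattern_insts \<nu> \<or> p \<in> extra \<nu>"
      using D_minus_B_Var unfolding extra_def by fastforce
    then have ?thesis
      using p(2) z(2) args_pattern_insts Var_arg_stuck_in_subst_B[OF sol] stuck by blast
  }
  ultimately show ?thesis by blast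
qed

lemma sol_sts_subset_if_stuck:
  assumes sol: "is_solution \<nu>" and stuck: "\<forall>s\<in>extra \<nu>. stuck \<nu> s"
  shows "sol_sts \<nu> \<subseteq> subst \<nu> ` B \<union> extra \<nu>"
proof
  fix w assume w: "w \<in> sol_sts \<nu>"
  have D_B: "w \<in> subst \<nu> ` B" if "w \<in> D" "w \<in> B"
    using that subst_D[OF sol] by (metis image_eqI)
  show "w \<in> subst \<nu> ` B \<union> extra \<nu>"
  proof (cases "is_comp w")
    case True
    show ?thesis
    proof (cases "w \<in> D \<union> pattern_insts \<nu>")
      case True
      then show ?thesis using \<open>is_comp w\<close> D_B D_minus_B_Var pattern_insts_subset by fastforce
    next
      case False
      then show ?thesis using w \<open>is_comp w\<close> unfolding extra_def by blast
    qed
  next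
    case False
    then have "w \<in> D" using atom_sol_sts_in_D[OF sol w] by blast
    then show ?thesis
      using w D_B D_minus_B_Var Var_sol_sts_in_subst_B[OF sol stuck] by blast
  qed
qed

lemma stuck_underivable:
  "stuck \<nu> s \<Longrightarrow> c \<in> sol_sts \<nu> \<Longrightarrow> c \<noteq> s \<Longrightarrow> eqE s c \<Longrightarrow> \<not> dyT c"
  unfolding stuck_def by blast

lemma stuck_partner:
  assumes sol: "is_solution \<nu>" and s: "s \<in> extra \<nu>" "stuck \<nu> s"
  shows "\<exists>c\<in>subst \<nu> ` B - sol_sts \<nu>. eqE s c"
proof -
  obtain c where c: "c \<in> D \<union> pattern_insts \<nu>" "c \<noteq> s" "eqE s c" "\<not> dyT c"
    using s(2) unfolding stuck_def by blast
  have "c \<in> subst \<nu> ` B"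
  proof (cases "c \<in> D")
    case True
    then have "c \<in> B" "subst \<nu> c = c" using c(4) underivable_D_in_B subst_D[OF sol] by auto
    then show ?thesis by (metis image_eqI)
  next
    case False
    then show ?thesis using c(1) pattern_insts_subset by blast
  qed
  moreover have "c \<notin> sol_sts \<nu>"
    using c(3,4) sol_sts_cases[OF sol] sts_T_dy_if_eqd by blast
  ultimately show ?thesis using c(3) by blast
qed

text \<open>Stuck extra subterms have pairwise distinct partners outside the solution: two extra
  subterms with the same partner would be provably equal, and extra subterms are derivable.\<close>

lemma card_sol_sts_le_if_stuck:
  assumes sol: "is_solution \<nu>" and stuck: "\<forall>s\<in>extra \<nu>. stuck \<nu> s"
  shows "card (sol_sts \<nu>) \<le> card B"
proof -
  let ?N = "subst \<nu> ` B"
  obtain f where f: "\<forall>s\<in>extra \<nu>. f s \<in> ?N - sol_sts \<nu> \<and> eqE s (f s)"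
    using stuck_partner[OF sol] stuck by metis
  have "inj_on f (extra \<nu>)"
  proof (rule inj_onI)
    fix s1 s2 assume s: "s1 \<in> extra \<nu>" "s2 \<in> extra \<nu>" "f s1 = f s2"
    have "eqE s1 (f s1)" "eqE s2 (f s2)" using f s(1,2) by auto
    then have "eqE s1 s2" using s(3) eqd.eq_sym eqd.eq_trans by metis
    moreover have "s2 \<in> sol_sts \<nu>" "dyT s2"
      using s(2) dy_extra[OF sol] unfolding extra_def by auto
    ultimately show "s1 = s2" using stuck_underivable stuck s(1) by blast
  qed
  then have "card (sol_sts \<nu>) \<le> card ?N"
    using finite_B f sol_sts_subset_if_stuck[OF sol stuck]
    by (intro card_le_if_inj_outside[where R = "extra \<nu>"]) auto
  also have "\<dots> \<le> card B" using finite_B by (rule card_image_le)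
  finally show ?thesis .
qed

lemma exists_solution_card_sol_sts_le:
  "is_solution \<mu> \<Longrightarrow> \<exists>\<nu>. is_solution \<nu> \<and> card (sol_sts \<nu>) \<le> card B"
proof (induction "card (extra \<mu>)" arbitrary: \<mu> rule: less_induct)
  case less
  show ?case
  proof (cases "\<forall>s\<in>extra \<mu>. stuck \<mu> s")
    case True
    then show ?thesis using card_sol_sts_le_if_stuck less.prems by blast
  next
    case False
    then obtain \<nu> where "is_solution \<nu>" "card (extra \<nu>) < card (extra \<mu>)"
      using extra_reducible_unless_stuck less.prems by blast
    then show ?thesis using less.hyps by blast
  qed
qed

lemma card_st_le_if_in_T:
  assumes d: "d \<in> T"
  shows "card (st d) \<le> card B"
proof (cases "d \<in> B")
  case True
  then show ?thesis using B_st_closed finite_B by (intro card_mono) auto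
next
  case False
  then obtain z where "d = Var z" using d T_subset_D D_minus_B_Var by blast
  then show ?thesis using t_in_B finite_B by (simp add: Suc_le_eq card_gt_0_iff) blast
qed

lemma exists_bounded_solution:
  assumes \<mu>: "is_solution \<mu>"
  shows "\<exists>\<nu>. is_solution \<nu> \<and> (\<forall>x\<in>X. card (st (the (\<nu> x))) \<le> card B)"
proof (cases "X = {}")
  case True
  then show ?thesis using \<mu> by blast
next
  case False
  then obtain d where d: "d \<in> T"
    using \<mu> nonempty_if_dy unfolding is_solution_def by blast
  obtain \<nu> where \<nu>: "is_solution \<nu>" "card (sol_sts \<nu>) \<le> card B"
    using exists_solution_card_sol_sts_le[OF \<mu>] by blast
  define \<nu>' where "\<nu>' y = (if y \<in> X - X_occ then Some d else \<nu> y)" for y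
  have "subst \<nu>' w = subst \<nu> w" if "w \<in> {t, u}" for w
    using that by (intro subst_cong) (auto simp: \<nu>'_def X_occ_def)
  then have sol': "is_solution \<nu>'"
    unfolding is_solution_def
  proof (intro conjI ballI)
    show "dom \<nu>' = X" using \<nu>(1) unfolding is_solution_def \<nu>'_def dom_def by auto
    fix y assume "y \<in> X"
    then show "dyT (the (\<nu>' y))"
      using \<nu>(1) d unfolding is_solution_def \<nu>'_def by (auto intro: dy.dy_ax)
  qed (use \<nu>(1) in \<open>simp add: is_solution_def\<close>)
  have "card (st (the (\<nu>' x))) \<le> card B" if "x \<in> X" for x
  proof (cases "x \<in> X_occ")
    case True
    then have "card (st (the (\<nu> x))) \<le> card (sol_sts \<nu>)"
      using finite_sol_sts unfolding sol_sts_def by (intro card_mono) auto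
    then show ?thesis using True \<nu>(2) by (simp add: \<nu>'_def)
  next
    case False
    then show ?thesis using that card_st_le_if_in_T[OF d] by (simp add: \<nu>'_def)
  qed
  then show ?thesis using sol' by blast
qed

end

lemma sts_st_closed: "w \<in> sts S \<Longrightarrow> v \<in> st w \<Longrightarrow> v \<in> sts S"
  using st_trans by (fastforce simp: in_sts_iff)

lemma st_asrts_st_closed: "w \<in> st_asrts M \<Longrightarrow> v \<in> st w \<Longrightarrow> v \<in> st_asrts M"
  using st_trans unfolding st_asrts_def st_asrt_def by blast

lemma sides_in_st_asrts: "a \<in> M \<Longrightarrow> fst (snd a) \<in> st_asrts M \<and> snd (snd a) \<in> st_asrts M"
  unfolding st_asrts_def st_asrt_def by (auto intro!: bexI[of _ a])

lemma vars_sts: "w \<in> sts S \<Longrightarrow> vars w \<subseteq> varss S"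
  unfolding varss_def using st_trans by (fastforce simp: in_sts_iff simp flip: Var_in_st_iff)

lemma vars_st_asrts: "w \<in> st_asrts M \<Longrightarrow> vars w \<subseteq> (\<Union>a\<in>M. asrt_vars a)"
  unfolding st_asrts_def st_asrt_def asrt_vars_def
  using st_trans by (fastforce simp flip: Var_in_st_iff)

lemma in_ker_E_iff: "(a, b) \<in> ker_E A \<longleftrightarrow> (\<exists>xs. (xs, a, b) \<in> A)"
  by (auto simp: ker_E_def)

lemma side_in_pubs:
  assumes "st_asrt a = st e \<union> st e'" "subst \<sigma> e = subst \<sigma> e'" "vars e \<inter> Vq = {}"
  shows "e \<in> pubs Vq a"
proof -
  have "s' = e" if "s' \<in> st e \<union> st e'" "e \<in> st s'" for s'
  proof (cases "s' \<in> st e")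
    case True
    then show ?thesis using that(2) st_antisym by blast
  next
    case False
    then have "e \<in> st e'" using that st_trans by blast
    then have "e = e'" using subst_eq_st_imp_eq assms(2) by metis
    then show ?thesis using False that(1) by blast
  qed
  then show ?thesis using assms(1,3) unfolding pubs_def by auto
qed

text \<open>The axiom sides free of quantification variables are public, hence in S.\<close>

lemma dy_kernel_if_eqd:
  assumes wf: "\<forall>s\<in>S. wf_trm K s" and san: "sanitized Vq S A" and \<theta>: "unifies \<theta> (ker_E A)"
    and c: "c \<in> sts (ker_T S A)" and eq: "eqd K ik (ker_T S A) (ker_E A) s c"
  shows "dy K ik (ker_T S A) c"
proof (cases "c \<in> ker_T S A")
  case True
  then show ?thesis by (rule dy.dy_ax)
next
  case False
  have pubs_S: "pubs Vq a \<subseteq> S" if "a \<in> A" for a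
    using san that unfolding sanitized_def by blast
  have S_Vq: "varss S \<inter> Vq = {}"
    using san unfolding sanitized_def by blast
  obtain s0 where s0: "s0 \<in> S" "c \<in> st s0"
    using c False unfolding ker_T_def in_sts_iff by auto
  then have "c \<in> sts S" by (auto simp: in_sts_iff)
  then have "vars c \<inter> Vq = {}" using vars_sts[of c S] S_Vq by blast
  moreover have "wf_trm K c" using wf s0 wf_st by blast
  moreover have "dy K ik (ker_T S A) e"
    if side: "(e, e') \<in> ker_E A \<or> (e', e) \<in> ker_E A" and pub: "vars e \<inter> Vq = {}" for e e'
  proof -
    have unif: "subst (Some \<circ> \<theta>) e = subst (Some \<circ> \<theta>) e'"
      using side \<theta> unfolding unifies_def by auto
    obtain xs where "(xs, e, e') \<in> A \<or> (xs, e', e) \<in> A"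
      using side unfolding in_ker_E_iff by blast
    then obtain a where a: "a \<in> A" "st_asrt a = st e \<union> st e'"
      by (auto simp: st_asrt_def Un_commute)
    have "e \<in> S" using side_in_pubs[OF a(2) unif pub] pubs_S[OF a(1)] by blast
    then show ?thesis unfolding ker_T_def by (auto intro: dy.dy_ax)
  qed
  ultimately show ?thesis
    using dy_if_eqd_term[of "ker_E A" Vq] conjunct2[OF eqd_term_if_eqd[OF eq]] by blast
qed

lemma witness_bound_kernel:
  assumes finS: "finite S" and finA: "finite A" and wfS: "\<forall>s\<in>S. wf_trm K s"
    and san: "sanitized Vq S A" and \<theta>: "unifies \<theta> (ker_E A)"
    and fresh: "bv \<alpha> \<inter> (varss S \<union> (\<Union>a\<in>A. asrt_vars a)) = {}"
  shows "witness_bound K ik (ker_T S A) (ker_E A) (sts S \<union> st_asrts A \<union> Var ` (\<Union>a\<in>A. bv a))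
    (sts S \<union> st_asrts (insert \<alpha> A)) (fst (snd \<alpha>)) (snd (snd \<alpha>)) (bv \<alpha>) \<theta>"
proof
  let ?D = "sts S \<union> st_asrts A \<union> Var ` (\<Union>a\<in>A. bv a)"
  show "\<forall>w\<in>ker_T S A. wf_trm K w" using wfS unfolding ker_T_def by auto
  show "ker_T S A \<subseteq> ?D" unfolding ker_T_def sts_def by auto
  show "v \<in> ?D" if "w \<in> ?D" "v \<in> st w" for w v
    using that sts_st_closed st_asrts_st_closed by auto
  show "vars w \<inter> bv \<alpha> = {}" if "w \<in> ?D" for w
    using that fresh vars_sts vars_st_asrts unfolding asrt_vars_def bv_def by fastforce
  show "a \<in> ?D \<inter> (sts S \<union> st_asrts (insert \<alpha> A)) \<and> b \<in> ?D \<inter> (sts S \<union> st_asrts (insert \<alpha> A))"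
    if "(a, b) \<in> ker_E A" for a b
    using that sides_in_st_asrts unfolding in_ker_E_iff st_asrts_def by fastforce
  show "finite (sts S \<union> st_asrts (insert \<alpha> A))"
    using finS finA unfolding sts_def st_asrts_def st_asrt_def by auto
  show "v \<in> sts S \<union> st_asrts (insert \<alpha> A)" if "w \<in> sts S \<union> st_asrts (insert \<alpha> A)" "v \<in> st w" for w v
    using that sts_st_closed st_asrts_st_closed by blast
  show "fst (snd \<alpha>) \<in> sts S \<union> st_asrts (insert \<alpha> A)" "snd (snd \<alpha>) \<in> sts S \<union> st_asrts (insert \<alpha> A)"
    using sides_in_st_asrts[of \<alpha> "insert \<alpha> A"] by auto
  show "c \<in> sts S \<union> st_asrts (insert \<alpha> A)" if "c \<in> ?D" "\<not> dy K ik (ker_T S A) c" for c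
    using that unfolding ker_T_def st_asrts_def by (auto intro: dy.dy_ax)
  show "\<exists>z. w = Var z" if "w \<in> ?D" "w \<notin> sts S \<union> st_asrts (insert \<alpha> A)" for w
    using that unfolding st_asrts_def by auto
  show "dy K ik (ker_T S A) c" if "c \<in> sts (ker_T S A)" "eqd K ik (ker_T S A) (ker_E A) s c" for c s
    using dy_kernel_if_eqd[OF wfS san \<theta> that] .
qed (fact \<theta>)

theorem theorem2:
  fixes K :: "'n set" and ik :: "'n \<Rightarrow> 'n" and Vq :: "'v set"
    and S :: "('n, 'v) trm set" and A :: "('n, 'v) asrt set"
    and \<alpha> :: "('n, 'v) asrt" and \<mu> :: "'v \<rightharpoonup> ('n, 'v) trm"
  assumes keys: "ik ` K \<subseteq> K" "\<forall>k\<in>K. ik (ik k) = k"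
    and finS: "finite S" and finA: "finite A"
    and wfS: "\<forall>s\<in>S. wf_trm K s"
    and wfA: "\<forall>a\<in>A. wf_asrt K Vq a"
    and wf\<alpha>: "wf_asrt K Vq \<alpha>"
    and san: "sanitized Vq S A"
    and cons: "consistent (ker_E A)"
    and fresh: "bv \<alpha> \<inter> (varss S \<union> (\<Union>a\<in>A. asrt_vars a)) = {}"
    and \<mu>: "witness_ok K ik (ker_T S A) (ker_E A) \<alpha> \<mu>"
  shows "\<exists>\<nu>. witness_ok K ik (ker_T S A) (ker_E A) \<alpha> \<nu> \<and>
           (\<forall>x \<in> dom \<nu>. card (st (the (\<nu> x))) \<le> card (sts S \<union> st_asrts (insert \<alpha> A)))"
proof -
  obtain \<theta> where \<theta>: "unifies \<theta> (ker_E A)"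
    using cons unfolding consistent_def unifies_def by blast
  interpret witness_bound K ik "ker_T S A" "ker_E A" "sts S \<union> st_asrts A \<union> Var ` (\<Union>a\<in>A. bv a)"
    "sts S \<union> st_asrts (insert \<alpha> A)" "fst (snd \<alpha>)" "snd (snd \<alpha>)" "bv \<alpha>" \<theta>
    using witness_bound_kernel[OF finS finA wfS san \<theta> fresh] .
  have "is_solution \<mu>" using \<mu> unfolding witness_ok_def is_solution_def by simp
  then obtain \<nu> where \<nu>: "is_solution \<nu>"
    "\<forall>x\<in>bv \<alpha>. card (st (the (\<nu> x))) \<le> card (sts S \<union> st_asrts (insert \<alpha> A))"
    using exists_bounded_solution by blast
  have dom_\<mu>: "dom \<mu> = bv \<alpha>" using \<mu> unfolding witness_ok_def by simp
  have "witness_ok K ik (ker_T S A) (ker_E A) \<alpha> \<nu>"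
    using \<mu> \<nu>(1) unfolding witness_ok_def is_solution_def by (simp add: dom_\<mu>)
  moreover have "dom \<nu> = bv \<alpha>" using \<nu>(1) unfolding is_solution_def by simp
  ultimately show ?thesis using \<nu>(2) by auto
qed

end
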